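(* Let $k$ be a positive integer and $m$ an integer with $1\leq m<k$. If integers $p_k,p_m$ satisfy $p_k>0$ and $p_m\geq p_k+\left\lfloor\frac{k}{m}\right\rfloor-1$, then there exists a connected graph $G$ such that $\psi_k(G)=p_k$ and $\psi_m(G)=p_m$.
   Context: All graphs are finite, simple and nonempty. For a graph $G$ and a positive integer $k$, a $k$-path vertex cover ($k$-PVC) of $G$ is a set $S$ of vertices such that every path on $k$ vertices in $G$ contains at least one vertex of $S$ (if $G$ has no path on $k$ vertices, the empty set is a $k$-PVC). $\psi_k(G)$ denotes the minimum cardinality of a $k$-PVC of $G$. *)

theory Defs
  imports Complex_Main
begin

definition graph :: "'a set \<Rightarrow> ('a \<Rightarrow> 'a \<Rightarrow> bool) \<Rightarrow> bool" where
  "graph V E \<longleftrightarrow> finite V \<and> V \<noteq> {} \<and> (\<forall>u v. E u v \<longrightarrow> u \<in> V \<and> v \<in> V)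
     \<and> (\<forall>u v. E u v \<longrightarrow> E v u) \<and> (\<forall>v. \<not> E v v)"

definition connected_graph :: "'a set \<Rightarrow> ('a \<Rightarrow> 'a \<Rightarrow> bool) \<Rightarrow> bool" where
  "connected_graph V E \<longleftrightarrow> (\<forall>u\<in>V. \<forall>v\<in>V. E\<^sup>*\<^sup>* u v)"

definition is_path :: "'a set \<Rightarrow> ('a \<Rightarrow> 'a \<Rightarrow> bool) \<Rightarrow> 'a list \<Rightarrow> bool" where
  "is_path V E xs \<longleftrightarrow> xs \<noteq> [] \<and> distinct xs \<and> set xs \<subseteq> V
     \<and> (\<forall>i. Suc i < length xs \<longrightarrow> E (xs ! i) (xs ! Suc i))"

definition is_kpvc :: "'a set \<Rightarrow> ('a \<Rightarrow> 'a \<Rightarrow> bool) \<Rightarrow> nat \<Rightarrow> 'a set \<Rightarrow> bool" where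
  "is_kpvc V E k S \<longleftrightarrow> S \<subseteq> V \<and>
     (\<forall>xs. is_path V E xs \<and> length xs = k \<longrightarrow> set xs \<inter> S \<noteq> {})"

definition psi :: "nat \<Rightarrow> 'a set \<Rightarrow> ('a \<Rightarrow> 'a \<Rightarrow> bool) \<Rightarrow> nat" where
  "psi k V E = (LEAST n. \<exists>S. is_kpvc V E k S \<and> card S = n)"

end

theory Submission
  imports Defs
begin

text \<open>Write \<open>k = q m + r\<close> with \<open>r < m\<close>. The graph is a clique \<open>K\<^sub>a\<close>, at least \<open>a + 1\<close> legs
  \<open>K\<^sub>m\<^sub>-\<^sub>1\<close> completely joined to it, and \<open>d\<close> pendant cliques \<open>K\<^sub>m\<close> hanging at one clique vertex.
  Between two clique vertices a path crosses at most one leg, so a path on \<open>k\<close> vertices avoiding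
  the pendant cliques uses at least \<open>q\<close> clique vertices: deleting \<open>a - q + 1\<close> clique vertices,
  the attachment vertex among them, kills all \<open>k\<close>-paths. Conversely any smaller set leaves \<open>q\<close>
  clique vertices and \<open>q + 1\<close> legs free, which zigzag into a path on \<open>q m + m - 1 \<ge> k\<close>
  vertices; hence \<open>\<psi>\<^sub>k = a - q + 1\<close>. An \<open>m\<close>-path cover must hit every pendant clique, and
  one free clique vertex with two free legs already carries an \<open>m\<close>-path, so \<open>\<psi>\<^sub>m = a + d\<close>.
  Choosing \<open>a = p\<^sub>k + q - 1\<close> and \<open>d = p\<^sub>m - a\<close> realises both values.\<close>

lemma is_path_iff_successively:
  "is_path V E xs \<longleftrightarrow> xs \<noteq> [] \<and> distinct xs \<and> set xs \<subseteq> V \<and> successively E xs"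
  unfolding is_path_def successively_conv_nth by auto

lemma is_path_take:
  "is_path V E xs \<Longrightarrow> 0 < n \<Longrightarrow> is_path V E (take n xs)"
  unfolding is_path_def using set_take_subset[of n xs] by auto

lemma is_kpvc_meets_long_path:
  assumes "is_kpvc V E k S" "is_path V E xs" "0 < k" "k \<le> length xs"
  shows "set xs \<inter> S \<noteq> {}"
proof -
  have "set (take k xs) \<inter> S \<noteq> {}"
    using assms is_path_take[OF assms(2,3)] unfolding is_kpvc_def by auto
  then show ?thesis using set_take_subset[of k xs] by blast
qed

lemma psi_eqI:
  assumes "is_kpvc V E k S" "card S = p" "\<And>S. is_kpvc V E k S \<Longrightarrow> p \<le> card S"
  shows "psi k V E = p"
  unfolding psi_def by (rule Least_equality) (use assms in auto)

lemma successively_const_on: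
  assumes "successively E xs" "set xs \<subseteq> D"
    and "\<And>u v. E u v \<Longrightarrow> u \<in> D \<Longrightarrow> v \<in> D \<Longrightarrow> f u = f v"
  shows "\<forall>x\<in>set xs. f x = f (hd xs)"
  using assms(1,2)
proof (induction xs rule: induct_list012)
  case (3 x y zs)
  then have "f x = f y" using assms(3) by auto
  with 3 show ?case by auto
qed auto

lemma exists_distinct_list_subset:
  assumes "n \<le> card A"
  obtains xs where "distinct xs" "length xs = n" "set xs \<subseteq> A"
proof -
  obtain T where "T \<subseteq> A" "card T = n" "finite T"
    using obtain_subset_with_card_n[OF assms] by blast
  moreover obtain xs where "set xs = T" "distinct xs"
    using finite_distinct_list[OF \<open>finite T\<close>] by blast
  ultimately show ?thesis using that by (auto simp: distinct_card)
qed

lemma distinct_length_le_card: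
  "distinct xs \<Longrightarrow> set xs \<subseteq> A \<Longrightarrow> finite A \<Longrightarrow> length xs \<le> card A"
  by (metis card_mono distinct_card)

text \<open>The vertices of \<open>C\<close> cut the path into at most \<open>card (set xs \<inter> C) + 1\<close> runs, each inside
  one class of \<open>f\<close>.\<close>
lemma successively_length_le_cut:
  assumes "distinct xs" "successively E xs" "set xs \<subseteq> D"
    and same_class: "\<And>u v. E u v \<Longrightarrow> u \<in> D - C \<Longrightarrow> v \<in> D - C \<Longrightarrow> f u = f v"
    and class_card: "\<And>i. finite {v \<in> D - C. f v = i} \<and> card {v \<in> D - C. f v = i} \<le> s"
  shows "length xs \<le> card (set xs \<inter> C) + (card (set xs \<inter> C) + 1) * s"
  using assms(1-3)
proof (induction "length xs" arbitrary: xs rule: less_induct)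
  case less
  define ys where "ys = takeWhile (\<lambda>v. v \<notin> C) xs"
  define zs where "zs = dropWhile (\<lambda>v. v \<notin> C) xs"
  have xs: "xs = ys @ zs" by (simp add: ys_def zs_def)
  have ys_C: "set ys \<inter> C = {}" by (auto simp: ys_def dest: set_takeWhileD)
  have ys_len: "length ys \<le> s"
  proof (cases "ys = []")
    case False
    have ys_D: "set ys \<subseteq> D - C" using less.prems(3) xs ys_C by auto
    have "successively E ys" using less.prems(2) xs by (metis successively_append_iff)
    then have "\<forall>x\<in>set ys. f x = f (hd ys)"
      by (rule successively_const_on[OF _ ys_D]) (use same_class in auto)
    then have "set ys \<subseteq> {v \<in> D - C. f v = f (hd ys)}" using ys_D by auto
    then show ?thesis
      using distinct_length_le_card class_card[of "f (hd ys)"] less.prems(1) xs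
      by (metis distinct_append le_trans)
  qed simp
  show ?case
  proof (cases zs)
    case Nil
    then show ?thesis using xs ys_len by (simp add: trans_le_add2)
  next
    case (Cons c zs')
    have "c \<in> C" using Cons hd_dropWhile[of "\<lambda>v. v \<notin> C" xs] unfolding zs_def by auto
    have zs'_dist: "distinct zs'" "c \<notin> set zs'" using less.prems(1) xs Cons by auto
    have "successively E zs'" using less.prems(2) xs Cons
      by (auto simp: successively_append_iff successively_Cons)
    then have IH: "length zs' \<le> card (set zs' \<inter> C) + (card (set zs' \<inter> C) + 1) * s"
      by (intro less.hyps) (use less.prems xs Cons zs'_dist in auto)
    have "set xs \<inter> C = insert c (set zs' \<inter> C)" using xs Cons ys_C \<open>c \<in> C\<close> by auto
    then have "card (set xs \<inter> C) = Suc (card (set zs' \<inter> C))" using zs'_dist by simp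
    moreover have "length xs = length ys + 1 + length zs'" using xs Cons by simp
    ultimately show ?thesis using IH ys_len by (simp add: algebra_simps)
  qed
qed

text \<open>The clique is \<open>{..<a}\<close>; vertex \<open>a + j * m + i\<close> is slot \<open>i\<close> of block \<open>j\<close>. Blocks \<open>j < b\<close>
  are the legs (cliques on their first \<open>m - 1\<close> slots, completely joined to the clique), blocks
  \<open>b \<le> j < b + d\<close> are pendant cliques \<open>K\<^sub>m\<close> joined to vertex \<open>0\<close> only.\<close>
locale pvc_construction =
  fixes a b d m :: nat
  assumes m_pos: "1 \<le> m" and a_pos: "1 \<le> a" and more_legs: "a < b"
begin

definition block :: "nat \<Rightarrow> nat" where "block v = (v - a) div m"

definition slot :: "nat \<Rightarrow> nat" where "slot v = (v - a) mod m"

definition V :: "nat set" where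
  "V = {v. v < a \<or> (a \<le> v \<and> block v < b + d \<and> (block v < b \<longrightarrow> slot v < m - 1))}"

definition E :: "nat \<Rightarrow> nat \<Rightarrow> bool" where
  "E u v \<longleftrightarrow> u \<noteq> v \<and> u \<in> V \<and> v \<in> V \<and>
     (u < a \<and> v < a
      \<or> u < a \<and> a \<le> v \<and> (block v < b \<or> u = 0)
      \<or> v < a \<and> a \<le> u \<and> (block u < b \<or> v = 0)
      \<or> a \<le> u \<and> a \<le> v \<and> block u = block v)"

definition block_list :: "nat \<Rightarrow> nat list" where
  "block_list j = [a + j * m ..< a + j * m + (if j < b then m - 1 else m)]"

lemma length_block_list [simp]: "length (block_list j) = (if j < b then m - 1 else m)"
  and distinct_block_list [simp]: "distinct (block_list j)"
  by (simp_all add: block_list_def)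

lemma block_slot: "a \<le> v \<Longrightarrow> v = a + block v * m + slot v"
  unfolding block_def slot_def by (metis add_diff_inverse_nat div_mult_mod_eq not_less add.assoc)

lemma slot_less: "slot v < m"
  unfolding slot_def using m_pos by simp

lemma block_eq [simp]: "i < m \<Longrightarrow> block (a + j * m + i) = j"
  unfolding block_def using m_pos by simp

lemma slot_eq [simp]: "i < m \<Longrightarrow> slot (a + j * m + i) = i"
  unfolding slot_def by simp

lemma finite_V: "finite V"
proof -
  have "V \<subseteq> {..< a + (b + d) * m}"
  proof
    fix v assume "v \<in> V"
    then have "v < a \<or> a \<le> v \<and> block v < b + d" by (auto simp: V_def)
    then show "v \<in> {..< a + (b + d) * m}"
      using m_pos by (auto simp: block_def div_less_iff_less_mult)
  qed
  then show ?thesis using finite_subset by blast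
qed

lemma graph_V_E: "graph V E"
  unfolding graph_def using finite_V a_pos by (auto simp: E_def V_def)

lemma connected_V_E: "connected_graph V E"
  unfolding connected_graph_def
proof (intro ballI)
  fix u v assume "u \<in> V" "v \<in> V"
  have "0 \<in> V" using a_pos by (auto simp: V_def)
  have to_0: "E\<^sup>*\<^sup>* w 0" and from_0: "E\<^sup>*\<^sup>* 0 w" if "w \<in> V" for w
    using that \<open>0 \<in> V\<close> a_pos by (cases "w = 0"; auto simp: E_def intro!: r_into_rtranclp)+
  show "E\<^sup>*\<^sup>* u v" using to_0[OF \<open>u \<in> V\<close>] from_0[OF \<open>v \<in> V\<close>] by (rule rtranclp_trans)
qed

lemma E_same_block: "E u v \<Longrightarrow> a \<le> u \<Longrightarrow> a \<le> v \<Longrightarrow> block u = block v"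
  unfolding E_def by auto

lemma set_block_list:
  assumes "j < b + d"
  shows "set (block_list j) = {v \<in> V. a \<le> v \<and> block v = j}"
proof (intro equalityI subsetI)
  fix v assume "v \<in> set (block_list j)"
  then obtain i where "i < (if j < b then m - 1 else m)" "v = a + j * m + i"
    unfolding block_list_def by (metis atLeastLessThan_iff le_Suc_ex nat_add_left_cancel_less set_upt)
  then show "v \<in> {v \<in> V. a \<le> v \<and> block v = j}"
    using assms by (auto simp: V_def split: if_splits)
next
  fix v assume "v \<in> {v \<in> V. a \<le> v \<and> block v = j}"
  then show "v \<in> set (block_list j)"
    using block_slot[of v] slot_less[of v] unfolding block_list_def V_def by auto
qed

lemma finite_block: "finite {v \<in> V. a \<le> v \<and> block v = j}"
  using finite_V by simp

lemma card_block_le: "card {v \<in> V. a \<le> v \<and> block v = j} \<le> (if j < b then m - 1 else m)"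
proof (cases "j < b + d")
  case True
  then show ?thesis using distinct_card[of "block_list j"] by (simp add: set_block_list[symmetric])
next
  case False
  then have "{v \<in> V. a \<le> v \<and> block v = j} = {}" by (auto simp: V_def)
  then show ?thesis by (simp only: card.empty zero_le)
qed

lemma successively_block_list: "j < b + d \<Longrightarrow> successively E (block_list j)"
  unfolding successively_conv_nth
proof (intro allI impI)
  fix i assume j: "j < b + d" and i: "Suc i < length (block_list j)"
  have "block_list j ! i \<in> set (block_list j)" "block_list j ! Suc i \<in> set (block_list j)"
    using i by auto
  moreover have "block_list j ! i \<noteq> block_list j ! Suc i"
    using i by (simp add: block_list_def)
  ultimately show "E (block_list j ! i) (block_list j ! Suc i)"
    using set_block_list[OF j] unfolding E_def by auto
qed

lemma E_clique_legs:
  assumes "u \<in> V" "v \<in> V" "u \<noteq> v" "u < a \<or> block u < b" "v < a \<or> block v < b"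
    and "u < a \<or> v < a \<or> block u = block v"
  shows "E u v"
  using assms unfolding E_def by auto

fun zigzag :: "nat list \<Rightarrow> nat list \<Rightarrow> nat list" where
  "zigzag (j # js) (c # cs) = block_list j @ c # zigzag js cs"
| "zigzag [j] [] = block_list j"
| "zigzag _ _ = []"

lemma zigzag_path:
  assumes "length js = Suc (length cs)" "distinct js" "distinct cs"
    and "set cs \<subseteq> {..<a}" "set js \<subseteq> {..<b}"
  shows "distinct (zigzag js cs) \<and> successively E (zigzag js cs)
    \<and> set (zigzag js cs) \<subseteq> set cs \<union> {v \<in> V. a \<le> v \<and> block v \<in> set js}
    \<and> length (zigzag js cs) = length cs * m + (m - 1)"
  using assms
proof (induction cs arbitrary: js)
  case Nil
  then obtain j where js: "js = [j]" "j < b" by (cases js) auto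
  then have "j < b + d" by simp
  with js show ?case using set_block_list successively_block_list by auto
next
  case (Cons c cs)
  then obtain j js' where js: "js = j # js'" by (cases js) auto
  have j: "j < b" "j \<notin> set js'" and c: "c < a" "c \<notin> set cs"
    using Cons.prems js by auto
  then have j_set: "set (block_list j) = {v \<in> V. a \<le> v \<and> block v = j}"
    using set_block_list by simp
  have IH: "distinct (zigzag js' cs) \<and> successively E (zigzag js' cs)
    \<and> set (zigzag js' cs) \<subseteq> set cs \<union> {v \<in> V. a \<le> v \<and> block v \<in> set js'}
    \<and> length (zigzag js' cs) = length cs * m + (m - 1)"
    using Cons.prems js by (intro Cons.IH) auto
  have c_V: "c \<in> V" using c by (simp add: V_def)
  have c_notin: "c \<notin> set (zigzag js' cs)" using IH c by auto
  have rest: "v \<in> V \<and> (v < a \<or> block v < b)" if "v \<in> set (zigzag js' cs)" for v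
    using that IH Cons.prems js by (auto simp: V_def)
  have "distinct (block_list j @ c # zigzag js' cs)"
    using IH j c_notin j_set c Cons.prems(4) by fastforce
  moreover have "successively E (block_list j @ c # zigzag js' cs)"
  proof -
    have "E (last (block_list j)) c" if "block_list j \<noteq> []"
      using last_in_set[OF that] j_set j c c_V by (intro E_clique_legs) auto
    moreover have "E c (hd (zigzag js' cs))" if "zigzag js' cs \<noteq> []"
      using rest[OF hd_in_set[OF that]] hd_in_set[OF that] c_notin c c_V
      by (intro E_clique_legs) auto
    ultimately show ?thesis
      using IH successively_block_list[of j] j
      by (auto simp: successively_append_iff successively_Cons)
  qed
  moreover have "set (block_list j @ c # zigzag js' cs)
      \<subseteq> set (c # cs) \<union> {v \<in> V. a \<le> v \<and> block v \<in> set js}"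
    using IH j_set js by auto
  moreover have "length (block_list j @ c # zigzag js' cs) = length (c # cs) * m + (m - 1)"
    using IH m_pos j by (simp add: algebra_simps)
  ultimately show ?case using js by simp
qed

lemma long_path_avoiding:
  assumes "1 \<le> t" "t \<le> card ({..<a} - S)" "Suc t \<le> card ({..<b} - block ` (S - {..<a}))"
  obtains xs where "is_path V E xs" "length xs = t * m + (m - 1)" "set xs \<inter> S = {}"
proof -
  obtain cs where cs: "distinct cs" "length cs = t" "set cs \<subseteq> {..<a} - S"
    using exists_distinct_list_subset[OF assms(2)] by blast
  obtain js where js: "distinct js" "length js = Suc t" "set js \<subseteq> {..<b} - block ` (S - {..<a})"
    using exists_distinct_list_subset[OF assms(3)] by blast
  let ?xs = "zigzag js cs"
  have P: "distinct ?xs" "successively E ?xs"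
    "set ?xs \<subseteq> set cs \<union> {v \<in> V. a \<le> v \<and> block v \<in> set js}"
    "length ?xs = t * m + (m - 1)"
    using zigzag_path[of js cs] cs js by auto
  have "set ?xs \<subseteq> V" using P(3) cs by (auto simp: V_def)
  moreover have "set ?xs \<inter> S = {}" using P(3) cs js by fastforce
  moreover have "?xs \<noteq> []"
  proof -
    have "0 < t * m" using assms(1) m_pos by simp
    then show ?thesis using P(4) by (metis add_gr_0 length_greater_0_conv)
  qed
  ultimately show ?thesis using P that by (auto simp: is_path_iff_successively)
qed

lemma card_split_clique:
  assumes "S \<subseteq> V"
  shows "card S = card (S \<inter> {..<a}) + card (S - {..<a})"
  using assms finite_V finite_subset card_Int_Diff by metis

text \<open>Once vertex \<open>0\<close> is deleted a path cannot leave a pendant block; otherwise it alternates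
  between legs (at most \<open>m - 1\<close> vertices each) and the at most \<open>a - p\<close> surviving clique vertices.\<close>
lemma path_avoiding_clique_prefix_length:
  assumes "distinct xs" "successively E xs" "set xs \<subseteq> V - {..<p}" "0 < p"
  shows "length xs \<le> max m (a - p + (a - p + 1) * (m - 1))"
proof -
  define D where "D = V - {..<p}"
  define P where "P = {v. a \<le> v \<and> b \<le> block v}"
  have P_closed: "(u \<in> P) = (v \<in> P)" if "E u v" "u \<in> D" "v \<in> D" for u v
    using that assms(4) unfolding D_def P_def E_def by auto
  have "set xs \<subseteq> D" using assms(3) unfolding D_def .
  then have all_P: "\<forall>x\<in>set xs. (x \<in> P) = (hd xs \<in> P)"
    by (rule successively_const_on[OF assms(2), where f = "\<lambda>x. x \<in> P"]) (rule P_closed)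
  show ?thesis
  proof (cases "hd xs \<in> P")
    case True
    then have xs_P: "set xs \<subseteq> D \<inter> P" using all_P assms(3) unfolding D_def by auto
    have "\<forall>x\<in>set xs. block x = block (hd xs)"
      by (rule successively_const_on[OF assms(2) xs_P]) (use E_same_block in \<open>auto simp: P_def\<close>)
    then have "set xs \<subseteq> {v \<in> V. a \<le> v \<and> block v = block (hd xs)}"
      using xs_P unfolding D_def P_def by auto
    then have "length xs \<le> card {v \<in> V. a \<le> v \<and> block v = block (hd xs)}"
      using distinct_length_le_card[OF assms(1)] finite_block by blast
    also have "\<dots> \<le> m" using card_block_le[of "block (hd xs)"] by (simp split: if_splits)
    finally show ?thesis by simp
  next
    case False
    then have xs_D: "set xs \<subseteq> D - P" using all_P assms(3) unfolding D_def by auto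
    have "length xs \<le> card (set xs \<inter> {..<a}) + (card (set xs \<inter> {..<a}) + 1) * (m - 1)"
    proof (rule successively_length_le_cut[OF assms(1,2) xs_D])
      show "block u = block v" if "E u v" "u \<in> D - P - {..<a}" "v \<in> D - P - {..<a}" for u v
        using E_same_block that by auto
      fix i
      have sub: "{v \<in> D - P - {..<a}. block v = i} \<subseteq> {v \<in> V. a \<le> v \<and> block v = i}"
        and empty: "b \<le> i \<Longrightarrow> {v \<in> D - P - {..<a}. block v = i} = {}"
        unfolding D_def P_def by auto
      have "card {v \<in> D - P - {..<a}. block v = i} \<le> m - 1"
      proof (cases "i < b")
        case True
        then show ?thesis
          using card_mono[OF finite_block sub] card_block_le[of i] by simp
      next
        case False
        then show ?thesis by (simp only: empty[OF leI[OF False]] card.empty zero_le)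
      qed
      then show "finite {v \<in> D - P - {..<a}. block v = i}
          \<and> card {v \<in> D - P - {..<a}. block v = i} \<le> m - 1"
        using finite_subset[OF sub finite_block] by blast
    qed
    moreover have cut: "card (set xs \<inter> {..<a}) \<le> a - p"
      using assms(3) card_mono[of "{p..<a}" "set xs \<inter> {..<a}"] by fastforce
    moreover have "(card (set xs \<inter> {..<a}) + 1) * (m - 1) \<le> (a - p + 1) * (m - 1)"
      using cut by (intro mult_le_mono1) simp
    ultimately show ?thesis by linarith
  qed
qed

lemma is_kpvc_k_clique_prefix:
  assumes "m < k" "k div m \<le> a"
  shows "is_kpvc V E k {..< a - k div m + 1}"
  unfolding is_kpvc_def
proof (intro conjI allI impI)
  define q where "q = k div m"
  have "0 < q" using assms(1) m_pos unfolding q_def by (simp add: div_greater_zero_iff)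
  then obtain q' where q': "q = Suc q'" using gr0_implies_Suc by blast
  obtain m' where m': "m = Suc m'" using m_pos not0_implies_Suc by fastforce
  have "q * m \<le> k" unfolding q_def by (rule div_times_less_eq_dividend)
  show "{..< a - k div m + 1} \<subseteq> V" using \<open>0 < q\<close> assms(2) unfolding q_def by (auto simp: V_def)
  fix xs assume "is_path V E xs \<and> length xs = k"
  then have xs: "distinct xs" "successively E xs" "set xs \<subseteq> V" "length xs = k"
    by (auto simp: is_path_iff_successively)
  show "set xs \<inter> {..< a - k div m + 1} \<noteq> {}"
  proof
    assume "set xs \<inter> {..< a - k div m + 1} = {}"
    then have "set xs \<subseteq> V - {..< a - q + 1}" using xs(3) unfolding q_def by blast
    from path_avoiding_clique_prefix_length[OF xs(1,2) this]
    have "length xs \<le> max m (a - (a - q + 1) + (a - (a - q + 1) + 1) * (m - 1))" by simp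
    moreover have "a - (a - q + 1) = q'" using assms(2) q' unfolding q_def by simp
    ultimately have "length xs \<le> max m (q' + q * m')" using q' m' by simp
    moreover have "q' + q * m' < q * m" using q' m' by simp
    ultimately show False using xs(4) assms(1) \<open>q * m \<le> k\<close> by linarith
  qed
qed

lemma card_ge_if_is_kpvc_k:
  assumes "is_kpvc V E k S" "m < k" "k div m \<le> a"
  shows "a - k div m + 1 \<le> card S"
proof (rule ccontr)
  define q where "q = k div m"
  have "1 \<le> q" using assms(2) m_pos unfolding q_def by (simp add: Suc_le_eq div_greater_zero_iff)
  have "k = q * m + k mod m" "k mod m < m" using m_pos unfolding q_def by simp_all
  then have k_le: "k \<le> q * m + (m - 1)" by linarith
  assume "\<not> a - k div m + 1 \<le> card S"
  then have card_S: "card S \<le> a - q" unfolding q_def by simp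
  have "S \<subseteq> V" using assms(1) unfolding is_kpvc_def by blast
  then have "finite S" using finite_V finite_subset by blast
  have free_clique: "q \<le> card ({..<a} - S)"
  proof -
    have "card ({..<a} - S) = a - card ({..<a} \<inter> S)" by (simp add: card_Diff_subset_Int)
    moreover have "card ({..<a} \<inter> S) \<le> card S" using \<open>finite S\<close> by (intro card_mono) auto
    ultimately show ?thesis using card_S assms(3) unfolding q_def by linarith
  qed
  have free_legs: "Suc q \<le> card ({..<b} - block ` (S - {..<a}))"
  proof -
    let ?B = "block ` (S - {..<a})"
    have "card ({..<b} - ?B) = b - card ({..<b} \<inter> ?B)" by (simp add: card_Diff_subset_Int)
    moreover have "card ({..<b} \<inter> ?B) \<le> card ?B" using \<open>finite S\<close> by (intro card_mono) auto
    moreover have "card ?B \<le> card (S - {..<a})" using \<open>finite S\<close> by (intro card_image_le) auto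
    ultimately show ?thesis
      using card_S card_split_clique[OF \<open>S \<subseteq> V\<close>] more_legs assms(3) unfolding q_def by linarith
  qed
  obtain xs where "is_path V E xs" "length xs = q * m + (m - 1)" "set xs \<inter> S = {}"
    using long_path_avoiding[OF \<open>1 \<le> q\<close> free_clique free_legs] by blast
  then show False using is_kpvc_meets_long_path[OF assms(1)] assms(2) k_le by auto
qed

lemma psi_k_eq: "m < k \<Longrightarrow> k div m \<le> a \<Longrightarrow> psi k V E = a - k div m + 1"
  by (rule psi_eqI[OF is_kpvc_k_clique_prefix _ card_ge_if_is_kpvc_k]) auto

lemma is_kpvc_m_clique_and_pendant_roots:
  "is_kpvc V E m ({..<a} \<union> (\<lambda>j. a + j * m) ` {b..<b + d})"
  unfolding is_kpvc_def
proof (intro conjI allI impI)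
  define S where "S = {..<a} \<union> (\<lambda>j. a + j * m) ` {b..<b + d}"
  have root: "block (a + j * m) = j" for j using block_eq[of 0 j] m_pos by simp
  show "{..<a} \<union> (\<lambda>j. a + j * m) ` {b..<b + d} \<subseteq> V"
    using root more_legs by (auto simp: V_def)
  fix xs assume "is_path V E xs \<and> length xs = m"
  then have xs: "distinct xs" "successively E xs" "set xs \<subseteq> V" "length xs = m"
    by (auto simp: is_path_iff_successively)
  show "set xs \<inter> S \<noteq> {}" unfolding S_def[symmetric]
  proof
    assume avoid: "set xs \<inter> S = {}"
    define j where "j = block (hd xs)"
    let ?X = "{v \<in> V. a \<le> v \<and> block v = j}"
    have "\<forall>x\<in>set xs. block x = block (hd xs)"
      by (rule successively_const_on[OF xs(2), of "V - {..<a}"])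
        (use xs(3) avoid E_same_block in \<open>auto simp: S_def\<close>)
    then have in_block: "set xs \<subseteq> ?X - S"
      using xs(3) avoid unfolding j_def S_def by auto
    have "card (?X - S) \<le> m - 1"
    proof (cases "j < b")
      case True
      have "card (?X - S) \<le> card ?X" by (rule card_mono[OF finite_block]) blast
      with True show ?thesis using card_block_le[of j] by simp
    next
      case False
      show ?thesis
      proof (cases "j < b + d")
        case True
        then have "a + j * m \<in> ?X \<inter> S"
          using False root unfolding S_def by (auto simp: V_def)
        then have "card (?X - S) < card ?X"
          by (intro psubset_card_mono finite_block) blast+
        then show ?thesis using card_block_le[of j] False by simp
      next
        case False
        then have "?X = {}" by (auto simp: V_def)
        then show ?thesis by (simp only: empty_Diff card.empty zero_le)
      qed
    qed
    moreover have "length xs \<le> card (?X - S)"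
      by (rule distinct_length_le_card[OF xs(1) in_block]) (simp add: finite_block)
    ultimately have "length xs \<le> m - 1" by (rule le_trans[rotated])
    then show False using xs(4) m_pos by simp
  qed
qed

lemma card_ge_if_is_kpvc_m:
  assumes "is_kpvc V E m S"
  shows "a + d \<le> card S"
proof (rule ccontr)
  assume "\<not> a + d \<le> card S"
  then have card_S: "card S < a + d" by simp
  have "S \<subseteq> V" using assms unfolding is_kpvc_def by blast
  then have "finite S" using finite_V finite_subset by blast
  define G where "G = block ` (S - {..<a})"
  have "finite G" using \<open>finite S\<close> unfolding G_def by simp
  show False
  proof (cases "{b..<b + d} \<subseteq> G")
    case False
    then obtain j where j: "b \<le> j" "j < b + d" "j \<notin> G" by (auto simp: subset_iff)
    have "is_path V E (block_list j)"
      unfolding is_path_iff_successively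
      using successively_block_list[of j] set_block_list[of j] j m_pos
      by (auto simp flip: length_greater_0_conv)
    moreover have "set (block_list j) \<inter> S = {}"
      using set_block_list[of j] j unfolding G_def by auto
    ultimately show False
      using is_kpvc_meets_long_path[OF assms] j m_pos by simp
  next
    case True
    have "card (G \<inter> {..<b}) + d \<le> card G"
    proof -
      have "card ((G \<inter> {..<b}) \<union> {b..<b + d}) = card (G \<inter> {..<b}) + d"
        using \<open>finite G\<close> by (subst card_Un_disjoint) auto
      moreover have "(G \<inter> {..<b}) \<union> {b..<b + d} \<subseteq> G" using True by auto
      ultimately show ?thesis using card_mono[OF \<open>finite G\<close>] by (metis (no_types))
    qed
    moreover have "card G \<le> card (S - {..<a})"
      unfolding G_def using \<open>finite S\<close> by (intro card_image_le) auto
    ultimately have budget: "card (S \<inter> {..<a}) + card (G \<inter> {..<b}) < a"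
      using card_S card_split_clique[OF \<open>S \<subseteq> V\<close>] by linarith
    have "card ({..<a} - S) = a - card (S \<inter> {..<a})"
      and "card ({..<b} - G) = b - card (G \<inter> {..<b})"
      by (simp_all add: card_Diff_subset_Int Int_commute)
    then have "1 \<le> card ({..<a} - S)" "Suc 1 \<le> card ({..<b} - block ` (S - {..<a}))"
      using budget more_legs unfolding G_def by linarith+
    then obtain xs where "is_path V E xs" "length xs = 1 * m + (m - 1)" "set xs \<inter> S = {}"
      using long_path_avoiding[of 1 S] by blast
    then show False using is_kpvc_meets_long_path[OF assms] m_pos by simp
  qed
qed

lemma psi_m_eq: "psi m V E = a + d"
proof (rule psi_eqI[OF is_kpvc_m_clique_and_pendant_roots _ card_ge_if_is_kpvc_m])
  have "inj_on (\<lambda>j. a + j * m) {b..<b + d}" using m_pos by (auto simp: inj_on_def)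
  then show "card ({..<a} \<union> (\<lambda>j. a + j * m) ` {b..<b + d}) = a + d"
    by (subst card_Un_disjoint) (auto simp: card_image)
qed

end

theorem mainTheorem6:
  fixes k m :: nat and pk pm :: int
  assumes "1 \<le> m" and "m < k"
    and "pk > 0"
    and "pm \<ge> pk + \<lfloor>real k / real m\<rfloor> - 1"
  shows "\<exists>(V :: nat set) E. graph V E \<and> connected_graph V E
           \<and> int (psi k V E) = pk \<and> int (psi m V E) = pm"
proof -
  define q where "q = k div m"
  define a where "a = nat pk + q - 1"
  define d where "d = nat pm - a"
  have q_pos: "1 \<le> q" using assms(1,2) by (simp add: q_def Suc_le_eq div_greater_zero_iff)
  have floor_q: "\<lfloor>real k / real m\<rfloor> = int q"
    unfolding q_def using floor_divide_of_nat_eq[of k m] by simp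
  have a: "1 \<le> a" "q \<le> a" "int a = pk + int q - 1"
    using assms(3) q_pos unfolding a_def by auto
  then have "int a \<le> pm" using assms(4) floor_q by linarith
  interpret pvc_construction a "Suc a" d m
    by unfold_locales (use assms(1) a in auto)
  have "int (psi k V E) = pk" using psi_k_eq[OF assms(2)] a q_def by simp
  moreover have "int (psi m V E) = pm" using psi_m_eq \<open>int a \<le> pm\<close> d_def by simp
  ultimately show ?thesis using graph_V_E connected_V_E by blast
qed

end
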